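(* On $\mathcal V$ we have $B_2^{(1)}B_2^{(0)}=q\,B_2^{(0)}B_2^{(1)}$.
   Context: Plethystic notation: for a symmetric function $f$ and a rational expression $E$ in $x_1,\dots,x_N,q,t$, $f[E]$ is obtained by writing $f$ as a polynomial in the power sums $p_k$ and replacing each $p_k$ by $E$ with every variable $u$ replaced by $u^k$. Put $X=x_1+\cdots+x_N$ and $X^{tq}=X(1-t)/(1-q)$. $S_\mu$ is the Schur function; $S_{m,n}$ for the partition $(m,n)$, $S_m=S_{(m)}$, $S_0=1$. Let $\mathcal V$ be the $\mathbb Q[q,t]$-linear span of $\{S_\lambda[X^{tq}]:\ell(\lambda)\le2\}$, and define linear operators on $\mathcal V$ by, for $m\ge n\ge0$ (writing $S_k$ for $S_k[X^{tq}]$; products of single-row Schur functions expand into Schur functions of at most two rows): $B_2^{(0)}S_{m,n}[X^{tq}]=-q^{m+1}(1-q^{n+1})S_{m+1}S_{n+1}+q^n(1-q^{m+2})S_{m+2}S_n$, $B_2^{(1)}S_{m,n}[X^{tq}]=q^{m+n+1}\big((1-q^{n+1})S_{m+1}S_{n+1}-(1-q^{m+2})S_{m+2}S_n\big)$. *)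

theory Defs
  imports "HOL-Computational_Algebra.Polynomial"
begin

text \<open>Coefficient ring Q[q,t] is modelled as (rat poly) poly: outer variable q,
  inner variable t.  An element of V is a finitely supported coefficient function
  on pairs (m,n) with m >= n >= 0; the pair (m,n) stands for the basis element
  S_{m,n}[X^{tq}] (and (m,0) for S_m[X^{tq}]).\<close>

type_synonym coeff = "rat poly poly"
type_synonym vec = "nat \<times> nat \<Rightarrow> coeff"

definition qv :: coeff where "qv = [:0, 1:]"
definition tv :: coeff where "tv = [:[:0, 1:]:]"

definition inV :: "vec \<Rightarrow> bool" where
  "inV v \<longleftrightarrow> finite {p. v p \<noteq> 0} \<and> (\<forall>m n. v (m, n) \<noteq> 0 \<longrightarrow> n \<le> m)"

definition basis :: "nat \<Rightarrow> nat \<Rightarrow> vec" where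
  "basis m n = (\<lambda>p. if p = (m, n) then 1 else 0)"

text \<open>Pieri rule: S_a S_b = sum_{k=0}^{min a b} S_{a+b-k,k}.\<close>
definition prodS :: "nat \<Rightarrow> nat \<Rightarrow> vec" where
  "prodS a b = (\<lambda>(i, j). if i + j = a + b \<and> j \<le> min a b then 1 else 0)"

definition B0_basis :: "nat \<Rightarrow> nat \<Rightarrow> vec" where
  "B0_basis m n = (\<lambda>p. - (qv ^ (m + 1) * (1 - qv ^ (n + 1))) * prodS (m + 1) (n + 1) p
                       + qv ^ n * (1 - qv ^ (m + 2)) * prodS (m + 2) n p)"

definition B1_basis :: "nat \<Rightarrow> nat \<Rightarrow> vec" where
  "B1_basis m n = (\<lambda>p. qv ^ (m + n + 1) * ((1 - qv ^ (n + 1)) * prodS (m + 1) (n + 1) p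
                       - (1 - qv ^ (m + 2)) * prodS (m + 2) n p))"

definition lin_ext :: "(nat \<Rightarrow> nat \<Rightarrow> vec) \<Rightarrow> vec \<Rightarrow> vec" where
  "lin_ext T v = (\<lambda>k. \<Sum>p\<in>{p. v p \<noteq> 0}. v p * T (fst p) (snd p) k)"

definition B0 :: "vec \<Rightarrow> vec" where "B0 = lin_ext B0_basis"
definition B1 :: "vec \<Rightarrow> vec" where "B1 = lin_ext B1_basis"

end

theory Submission
  imports Defs
begin

text \<open>Both operators send S_{m,n} to a combination of S_{m+1} S_{n+1} and S_{m+2} S_n, and by the
  Pieri rule these products are partial antidiagonal sums S_{M,0} + ... + S_{M-k,k}, M = m + n + 2.
  Applying a second operator of the same shape to such a sum gives an explicit combination of the
  partial sums of the next antidiagonal, so on a basis vector the q-commutation reduces to one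
  coefficient identity for each of them.  In the generic case it holds because exchanging the
  roles of B_2^(0) and B_2^(1) multiplies both factors of the coefficient by powers of q
  (B1_coeff_sum, B1_coeff_sum_adjacent); the boundary cases are direct computations.\<close>

definition B0_coeff11 :: "'a::comm_ring_1 \<Rightarrow> nat \<Rightarrow> nat \<Rightarrow> 'a" where
  "B0_coeff11 q m n = - (q ^ (m + 1) * (1 - q ^ (n + 1)))"

definition B0_coeff20 :: "'a::comm_ring_1 \<Rightarrow> nat \<Rightarrow> nat \<Rightarrow> 'a" where
  "B0_coeff20 q m n = q ^ n * (1 - q ^ (m + 2))"

definition B1_coeff11 :: "'a::comm_ring_1 \<Rightarrow> nat \<Rightarrow> nat \<Rightarrow> 'a" where
  "B1_coeff11 q m n = q ^ (m + n + 1) * (1 - q ^ (n + 1))"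

definition B1_coeff20 :: "'a::comm_ring_1 \<Rightarrow> nat \<Rightarrow> nat \<Rightarrow> 'a" where
  "B1_coeff20 q m n = - (q ^ (m + n + 1) * (1 - q ^ (m + 2)))"

text \<open>slice M k is S_{M,0} + S_{M-1,1} + ... + S_{M-k,k}, that is S_{M-k} S_k when k <= M - k.\<close>

definition slice :: "nat \<Rightarrow> nat \<Rightarrow> nat \<times> nat \<Rightarrow> 'a::zero_neq_one" where
  "slice M k = (\<lambda>(i, j). if i + j = M \<and> j \<le> k then 1 else 0)"

definition slice_op ::
    "(nat \<Rightarrow> nat \<Rightarrow> 'a::comm_ring_1) \<Rightarrow> (nat \<Rightarrow> nat \<Rightarrow> 'a) \<Rightarrow> nat \<Rightarrow> nat \<Rightarrow> nat \<times> nat \<Rightarrow> 'a" where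
  "slice_op \<alpha> \<beta> m n = (\<lambda>p. \<alpha> m n * slice (m + n + 2) (n + 1) p + \<beta> m n * slice (m + n + 2) n p)"

text \<open>The coefficient of slice (m + n + 4) j in slice_op \<gamma> \<delta> applied to slice_op \<alpha> \<beta> m n,
  where w i is the coefficient of S_{M-i,i} in the latter.\<close>

definition comp_coeff ::
    "(nat \<Rightarrow> nat \<Rightarrow> 'a::comm_ring_1) \<Rightarrow> (nat \<Rightarrow> nat \<Rightarrow> 'a) \<Rightarrow>
     (nat \<Rightarrow> nat \<Rightarrow> 'a) \<Rightarrow> (nat \<Rightarrow> nat \<Rightarrow> 'a) \<Rightarrow> nat \<Rightarrow> nat \<Rightarrow> nat \<Rightarrow> 'a" where
  "comp_coeff \<alpha> \<beta> \<gamma> \<delta> m n j =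
     (let M = m + n + 2; w = (\<lambda>i. slice_op \<alpha> \<beta> m n (M - i, i))
      in (case j of 0 \<Rightarrow> 0 | Suc i \<Rightarrow> w i * \<gamma> (M - i) i) + w j * \<delta> (M - j) j)"

lemma prodS_eq_slice: "b \<le> a \<Longrightarrow> prodS a b = slice (a + b) b"
  by (auto simp: prodS_def slice_def min_def)

lemma B0_basis_eq_slice_op:
  assumes "n \<le> m"
  shows "B0_basis m n = slice_op (B0_coeff11 qv) (B0_coeff20 qv) m n"
proof -
  have "prodS (m + 1) (n + 1) = slice (m + n + 2) (n + 1)" "prodS (m + 2) n = slice (m + n + 2) n"
    using prodS_eq_slice assms by (simp_all add: ac_simps)
  then show ?thesis
    by (simp add: B0_basis_def slice_op_def B0_coeff11_def B0_coeff20_def)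
qed

lemma B1_basis_eq_slice_op:
  assumes "n \<le> m"
  shows "B1_basis m n = slice_op (B1_coeff11 qv) (B1_coeff20 qv) m n"
proof -
  have "prodS (m + 1) (n + 1) = slice (m + n + 2) (n + 1)" "prodS (m + 2) n = slice (m + n + 2) n"
    using prodS_eq_slice assms by (simp_all add: ac_simps)
  then show ?thesis
    by (simp add: B1_basis_def slice_op_def B1_coeff11_def B1_coeff20_def fun_eq_iff algebra_simps)
qed

lemma slice_op_support:
  "{p. slice_op \<alpha> \<beta> m n p \<noteq> 0} \<subseteq> (\<lambda>j. (m + n + 2 - j, j)) ` {..n + 1}"
proof
  fix p
  assume "p \<in> {p. slice_op \<alpha> \<beta> m n p \<noteq> 0}"
  then obtain i j where "p = (i, j)" "i + j = m + n + 2" "j \<le> n + 1"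
    by (cases p) (auto simp: slice_op_def slice_def split: if_splits)
  then show "p \<in> (\<lambda>j. (m + n + 2 - j, j)) ` {..n + 1}"
    by (auto intro!: image_eqI[of _ _ j])
qed

lemma finite_slice_op_support: "finite {p. slice_op \<alpha> \<beta> m n p \<noteq> 0}"
  using finite_subset[OF slice_op_support] by blast

lemma inV_slice_op:
  assumes "n \<le> m"
  shows "inV (slice_op \<alpha> \<beta> m n)"
  unfolding inV_def
proof (intro conjI allI impI finite_slice_op_support)
  fix i j
  assume "slice_op \<alpha> \<beta> m n (i, j) \<noteq> 0"
  then have "(i, j) \<in> (\<lambda>j. (m + n + 2 - j, j)) ` {..n + 1}"
    using slice_op_support by blast
  with assms show "j \<le> i"
    by auto
qed

lemma lin_ext_superset:
  assumes "finite A" "{p. w p \<noteq> 0} \<subseteq> A"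
  shows "lin_ext T w x = (\<Sum>p\<in>A. w p * T (fst p) (snd p) x)"
  unfolding lin_ext_def using assms by (intro sum.mono_neutral_left) auto

lemma lin_ext_antidiagonal:
  assumes "{p. w p \<noteq> 0} \<subseteq> (\<lambda>j. (M - j, j)) ` {..K}"
  shows "lin_ext T w x = (\<Sum>j\<le>K. w (M - j, j) * T (M - j) j x)"
proof -
  have "inj_on (\<lambda>j. (M - j, j)) {..K}"
    by (auto simp: inj_on_def)
  moreover have "lin_ext T w x = (\<Sum>p\<in>(\<lambda>j. (M - j, j)) ` {..K}. w p * T (fst p) (snd p) x)"
    using assms by (intro lin_ext_superset) auto
  ultimately show ?thesis
    by (simp add: sum.reindex)
qed

lemma lin_ext_cong:
  "(\<And>m n. w (m, n) \<noteq> 0 \<Longrightarrow> T m n = T' m n) \<Longrightarrow> lin_ext T w = lin_ext T' w"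
  unfolding lin_ext_def by (intro ext sum.cong) auto

lemma lin_ext_scale: "lin_ext (\<lambda>m n p. c * T m n p) w = (\<lambda>p. c * lin_ext T w p)"
  by (simp add: lin_ext_def sum_distrib_left ac_simps)

lemma lin_ext_lin_ext:
  assumes "finite {p. v p \<noteq> 0}" and "\<And>m n. v (m, n) \<noteq> 0 \<Longrightarrow> finite {r. U m n r \<noteq> 0}"
  shows "lin_ext T (lin_ext U v) = lin_ext (\<lambda>m n. lin_ext T (U m n)) v"
proof
  fix x
  define S where "S = {p. v p \<noteq> 0}"
  define A where "A = (\<Union>p\<in>S. {r. U (fst p) (snd p) r \<noteq> 0})"
  have "finite A"
    using assms by (auto simp: A_def S_def)
  have "{r. lin_ext U v r \<noteq> 0} \<subseteq> A"
  proof
    fix r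
    assume "r \<in> {r. lin_ext U v r \<noteq> 0}"
    then obtain p where "p \<in> S" "v p * U (fst p) (snd p) r \<noteq> 0"
      unfolding lin_ext_def S_def by (auto elim: sum.not_neutral_contains_not_neutral)
    then show "r \<in> A"
      by (auto simp: A_def)
  qed
  then have "lin_ext T (lin_ext U v) x = (\<Sum>r\<in>A. (\<Sum>p\<in>S. v p * U (fst p) (snd p) r) * T (fst r) (snd r) x)"
    using lin_ext_superset[OF \<open>finite A\<close>] by (simp add: lin_ext_def S_def)
  also have "\<dots> = (\<Sum>p\<in>S. v p * (\<Sum>r\<in>A. U (fst p) (snd p) r * T (fst r) (snd r) x))"
    by (simp add: sum_distrib_left sum_distrib_right mult.assoc sum.swap[of _ A])
  also have "\<dots> = (\<Sum>p\<in>S. v p * lin_ext T (U (fst p) (snd p)) x)"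
  proof (rule sum.cong[OF refl])
    fix p
    assume "p \<in> S"
    then have "{r. U (fst p) (snd p) r \<noteq> 0} \<subseteq> A"
      by (auto simp: A_def)
    then show "v p * (\<Sum>r\<in>A. U (fst p) (snd p) r * T (fst r) (snd r) x) = v p * lin_ext T (U (fst p) (snd p)) x"
      by (simp add: lin_ext_superset[OF \<open>finite A\<close>])
  qed
  also have "\<dots> = lin_ext (\<lambda>m n. lin_ext T (U m n)) v x"
    by (simp add: lin_ext_def S_def)
  finally show "lin_ext T (lin_ext U v) x = lin_ext (\<lambda>m n. lin_ext T (U m n)) v x" .
qed

lemma lin_ext_slice_op_slice_op:
  "lin_ext (slice_op \<gamma> \<delta>) (slice_op \<alpha> \<beta> m n)
     = (\<lambda>p. \<Sum>j\<le>n + 2. comp_coeff \<alpha> \<beta> \<gamma> \<delta> m n j * slice (m + n + 4) j p)"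
proof
  fix p
  define M where "M = m + n + 2"
  define w where "w j = slice_op \<alpha> \<beta> m n (M - j, j)" for j
  define s where "s j = (slice (m + n + 4) j p :: coeff)" for j
  have "w (n + 2) = 0"
    by (simp add: w_def M_def slice_op_def slice_def)
  have "lin_ext (slice_op \<gamma> \<delta>) (slice_op \<alpha> \<beta> m n) p
      = (\<Sum>j\<le>n + 1. w j * slice_op \<gamma> \<delta> (M - j) j p)"
    unfolding w_def M_def by (rule lin_ext_antidiagonal[OF slice_op_support])
  also have "\<dots> = (\<Sum>j\<le>n + 1. w j * \<gamma> (M - j) j * s (Suc j) + w j * \<delta> (M - j) j * s j)"
  proof (rule sum.cong[OF refl])
    fix j
    assume "j \<in> {..n + 1}"
    then have "M - j + j + 2 = m + n + 4"
      by (simp add: M_def)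
    then show "w j * slice_op \<gamma> \<delta> (M - j) j p = w j * \<gamma> (M - j) j * s (Suc j) + w j * \<delta> (M - j) j * s j"
      by (simp only: slice_op_def s_def Suc_eq_plus1 algebra_simps)
  qed
  also have "\<dots> = (\<Sum>j\<le>n + 1. w j * \<gamma> (M - j) j * s (Suc j)) + (\<Sum>j\<le>n + 1. w j * \<delta> (M - j) j * s j)"
    by (rule sum.distrib)
  also have "\<dots> = (\<Sum>j\<le>n + 2. (case j of 0 \<Rightarrow> 0 | Suc i \<Rightarrow> w i * \<gamma> (M - i) i) * s j)
      + (\<Sum>j\<le>n + 2. w j * \<delta> (M - j) j * s j)"
  proof -
    have "(\<Sum>j\<le>n + 1. w j * \<gamma> (M - j) j * s (Suc j))
        = (\<Sum>j\<le>Suc (n + 1). (case j of 0 \<Rightarrow> 0 | Suc i \<Rightarrow> w i * \<gamma> (M - i) i) * s j)"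
      by (subst sum.atMost_Suc_shift) simp
    moreover have "(\<Sum>j\<le>n + 1. w j * \<delta> (M - j) j * s j) = (\<Sum>j\<le>Suc (n + 1). w j * \<delta> (M - j) j * s j)"
      using \<open>w (n + 2) = 0\<close> by simp
    ultimately show ?thesis
      by simp
  qed
  also have "\<dots> = (\<Sum>j\<le>n + 2. comp_coeff \<alpha> \<beta> \<gamma> \<delta> m n j * s j)"
    unfolding comp_coeff_def Let_def w_def M_def by (simp add: sum.distrib algebra_simps)
  finally show "lin_ext (slice_op \<gamma> \<delta>) (slice_op \<alpha> \<beta> m n) p
      = (\<Sum>j\<le>n + 2. comp_coeff \<alpha> \<beta> \<gamma> \<delta> m n j * slice (m + n + 4) j p)"
    by (simp only: s_def)
qed

lemma comp_coeff_eqs: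
  "comp_coeff \<alpha> \<beta> \<gamma> \<delta> m n 0 = (\<alpha> m n + \<beta> m n) * \<delta> (m + n + 2) 0"
  "j < n \<Longrightarrow> comp_coeff \<alpha> \<beta> \<gamma> \<delta> m n (Suc j)
     = (\<alpha> m n + \<beta> m n) * (\<gamma> (m + n + 2 - j) j + \<delta> (m + n + 1 - j) (Suc j))"
  "comp_coeff \<alpha> \<beta> \<gamma> \<delta> m n (Suc n) = (\<alpha> m n + \<beta> m n) * \<gamma> (m + 2) n + \<alpha> m n * \<delta> (m + 1) (Suc n)"
  "comp_coeff \<alpha> \<beta> \<gamma> \<delta> m n (Suc (Suc n)) = \<alpha> m n * \<gamma> (m + 1) (Suc n)"
  "n + 2 < j \<Longrightarrow> comp_coeff \<alpha> \<beta> \<gamma> \<delta> m n j = 0"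
  by (auto simp: comp_coeff_def slice_op_def slice_def algebra_simps split: nat.split)

lemma B1_coeff_sum:
  shows "B1_coeff11 q m n + B1_coeff20 q m n = - (q ^ (m + n + 2) * (B0_coeff11 q m n + B0_coeff20 q m n))"
  by (simp add: B0_coeff11_def B0_coeff20_def B1_coeff11_def B1_coeff20_def algebra_simps power_add)

lemma B1_coeff_sum_adjacent:
  shows "B1_coeff11 q (k + 1) i + B1_coeff20 q k (i + 1)
       = - (q ^ (k + i + 2) * (B0_coeff11 q (k + 1) i + B0_coeff20 q k (i + 1)))"
  by (simp add: B0_coeff11_def B0_coeff20_def B1_coeff11_def B1_coeff20_def algebra_simps power_add)

lemma comp_coeff_B1_B0:
  fixes q :: "'a::comm_ring_1"
  shows "comp_coeff (B0_coeff11 q) (B0_coeff20 q) (B1_coeff11 q) (B1_coeff20 q) m n j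
       = q * comp_coeff (B1_coeff11 q) (B1_coeff20 q) (B0_coeff11 q) (B0_coeff20 q) m n j"
proof -
  note defs = comp_coeff_eqs B0_coeff11_def B0_coeff20_def B1_coeff11_def B1_coeff20_def
  have "j = 0 \<or> 0 < j \<and> j \<le> n \<or> j = n + 1 \<or> j = n + 2 \<or> n + 2 < j"
    by linarith
  then consider "j = 0" | i where "j = Suc i" "i < n" | "j = Suc n" | "j = Suc (Suc n)" | "n + 2 < j"
    by (metis Suc_eq_plus1 Suc_le_eq add_2_eq_Suc' gr0_conv_Suc)
  then show ?thesis
  proof cases
    case (2 i)
    define k where "k = m + n + 1 - i"
    have k: "m + n + 2 - i = k + 1" "m + n + 1 - i = k" "k + i + 2 = Suc (m + n + 2)"
      using 2 by (auto simp: k_def)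
    let ?s = "B0_coeff11 q m n + B0_coeff20 q m n"
    let ?t = "B0_coeff11 q (k + 1) i + B0_coeff20 q k (i + 1)"
    have "comp_coeff (B0_coeff11 q) (B0_coeff20 q) (B1_coeff11 q) (B1_coeff20 q) m n j
        = ?s * (B1_coeff11 q (k + 1) i + B1_coeff20 q k (i + 1))"
      using 2 k by (simp add: comp_coeff_eqs)
    also have "\<dots> = - (q * q ^ (m + n + 2) * ?s * ?t)"
      unfolding B1_coeff_sum_adjacent k(3) by (simp add: algebra_simps)
    also have "\<dots> = q * ((B1_coeff11 q m n + B1_coeff20 q m n) * ?t)"
      unfolding B1_coeff_sum by (simp add: algebra_simps)
    also have "\<dots> = q * comp_coeff (B1_coeff11 q) (B1_coeff20 q) (B0_coeff11 q) (B0_coeff20 q) m n j"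
      using 2 k by (simp add: comp_coeff_eqs)
    finally show ?thesis .
  qed (simp_all add: defs algebra_simps power_add)
qed

lemma lin_ext_B0_basis:
  "inV w \<Longrightarrow> lin_ext B0_basis w = lin_ext (slice_op (B0_coeff11 qv) (B0_coeff20 qv)) w"
  by (rule lin_ext_cong) (simp add: inV_def B0_basis_eq_slice_op)

lemma lin_ext_B1_basis:
  "inV w \<Longrightarrow> lin_ext B1_basis w = lin_ext (slice_op (B1_coeff11 qv) (B1_coeff20 qv)) w"
  by (rule lin_ext_cong) (simp add: inV_def B1_basis_eq_slice_op)

lemma B1_B0_basis_qcommute:
  assumes "n \<le> m"
  shows "B1 (B0_basis m n) = (\<lambda>p. qv * B0 (B1_basis m n) p)"
proof -
  let ?\<alpha>\<^sub>0 = "B0_coeff11 qv" and ?\<beta>\<^sub>0 = "B0_coeff20 qv"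
  let ?\<alpha>\<^sub>1 = "B1_coeff11 qv" and ?\<beta>\<^sub>1 = "B1_coeff20 qv"
  have "B1 (B0_basis m n) = lin_ext (slice_op ?\<alpha>\<^sub>1 ?\<beta>\<^sub>1) (slice_op ?\<alpha>\<^sub>0 ?\<beta>\<^sub>0 m n)"
    using assms by (simp add: B1_def B0_basis_eq_slice_op lin_ext_B1_basis inV_slice_op)
  also have "\<dots> = (\<lambda>p. \<Sum>j\<le>n + 2. comp_coeff ?\<alpha>\<^sub>0 ?\<beta>\<^sub>0 ?\<alpha>\<^sub>1 ?\<beta>\<^sub>1 m n j * slice (m + n + 4) j p)"
    by (rule lin_ext_slice_op_slice_op)
  also have "\<dots> = (\<lambda>p. qv * (\<Sum>j\<le>n + 2. comp_coeff ?\<alpha>\<^sub>1 ?\<beta>\<^sub>1 ?\<alpha>\<^sub>0 ?\<beta>\<^sub>0 m n j * slice (m + n + 4) j p))"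
    by (simp only: comp_coeff_B1_B0 sum_distrib_left mult.assoc)
  also have "\<dots> = (\<lambda>p. qv * lin_ext (slice_op ?\<alpha>\<^sub>0 ?\<beta>\<^sub>0) (slice_op ?\<alpha>\<^sub>1 ?\<beta>\<^sub>1 m n) p)"
    by (simp add: lin_ext_slice_op_slice_op)
  also have "\<dots> = (\<lambda>p. qv * B0 (B1_basis m n) p)"
    using assms by (simp add: B0_def B1_basis_eq_slice_op lin_ext_B0_basis inV_slice_op)
  finally show ?thesis .
qed

theorem mainTheorem10:
  assumes "inV v"
  shows "B1 (B0 v) = (\<lambda>p. qv * B0 (B1 v) p)"
proof -
  have fin: "finite {p. v p \<noteq> 0}" and le: "\<And>m n. v (m, n) \<noteq> 0 \<Longrightarrow> n \<le> m"
    using assms by (auto simp: inV_def)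
  have "B1 (B0 v) = lin_ext (\<lambda>m n. B1 (B0_basis m n)) v"
    unfolding B0_def B1_def using fin le
    by (intro lin_ext_lin_ext) (simp_all add: B0_basis_eq_slice_op finite_slice_op_support)
  also have "\<dots> = lin_ext (\<lambda>m n p. qv * B0 (B1_basis m n) p) v"
    using le by (intro lin_ext_cong) (simp add: B1_B0_basis_qcommute)
  also have "\<dots> = (\<lambda>p. qv * B0 (B1 v) p)"
    unfolding lin_ext_scale B0_def B1_def using fin le
    by (subst lin_ext_lin_ext) (simp_all add: B1_basis_eq_slice_op finite_slice_op_support)
  finally show ?thesis .
qed

end
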